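(* For every integer $\ell\ge2$ there exist two trees $T_1,T_2$ with the same number of vertices such that $D(T_1)>D(T_2)$ and $W_{2\ell}(T_1)>W_{2\ell}(T_2)$. In particular, $D(T_1)<D(T_2)$ does not in general imply $W_{2\ell}(T_1)>W_{2\ell}(T_2)$ for trees of the same order.
   Context: For a tree $T$, $D(T)=\sum_{x,y\in V(T)} d(x,y)$, where $d$ is the graph distance, and $W_m(T)$ denotes the number of closed walks of length $m$ in $T$. *)

theory Defs
  imports Main
begin

definition simple_graph :: "'a set \<Rightarrow> ('a \<Rightarrow> 'a \<Rightarrow> bool) \<Rightarrow> bool" where
  "simple_graph V E \<longleftrightarrow> finite V \<and> (\<forall>x y. E x y \<longrightarrow> x \<in> V \<and> y \<in> V)
     \<and> (\<forall>x y. E x y \<longrightarrow> E y x) \<and> (\<forall>x. \<not> E x x)"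

text \<open>A walk is a nonempty vertex list with consecutive vertices adjacent;
  its length is the number of steps, i.e. length xs - 1.\<close>

definition is_walk :: "'a set \<Rightarrow> ('a \<Rightarrow> 'a \<Rightarrow> bool) \<Rightarrow> 'a list \<Rightarrow> bool" where
  "is_walk V E xs \<longleftrightarrow> xs \<noteq> [] \<and> set xs \<subseteq> V
     \<and> (\<forall>i. Suc i < length xs \<longrightarrow> E (xs ! i) (xs ! Suc i))"

definition connected_graph :: "'a set \<Rightarrow> ('a \<Rightarrow> 'a \<Rightarrow> bool) \<Rightarrow> bool" where
  "connected_graph V E \<longleftrightarrow> V \<noteq> {} \<and>
     (\<forall>x\<in>V. \<forall>y\<in>V. \<exists>xs. is_walk V E xs \<and> hd xs = x \<and> last xs = y)"

text \<open>A cycle: closed walk of length at least 3 whose vertices, apart from the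
  repeated endpoint, are pairwise distinct.\<close>

definition is_cycle :: "'a set \<Rightarrow> ('a \<Rightarrow> 'a \<Rightarrow> bool) \<Rightarrow> 'a list \<Rightarrow> bool" where
  "is_cycle V E xs \<longleftrightarrow> is_walk V E xs \<and> length xs \<ge> 4 \<and> hd xs = last xs
     \<and> distinct (tl xs)"

definition is_tree :: "'a set \<Rightarrow> ('a \<Rightarrow> 'a \<Rightarrow> bool) \<Rightarrow> bool" where
  "is_tree V E \<longleftrightarrow> simple_graph V E \<and> connected_graph V E \<and> (\<nexists>xs. is_cycle V E xs)"

definition dist :: "'a set \<Rightarrow> ('a \<Rightarrow> 'a \<Rightarrow> bool) \<Rightarrow> 'a \<Rightarrow> 'a \<Rightarrow> nat" where
  "dist V E x y = (LEAST n. \<exists>xs. is_walk V E xs \<and> hd xs = x \<and> last xs = y \<and> length xs = Suc n)"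

text \<open>D(T) = sum over all (ordered) pairs x, y of vertices of d(x,y).\<close>

definition total_dist :: "'a set \<Rightarrow> ('a \<Rightarrow> 'a \<Rightarrow> bool) \<Rightarrow> nat" where
  "total_dist V E = (\<Sum>x\<in>V. \<Sum>y\<in>V. dist V E x y)"

definition closed_walks :: "nat \<Rightarrow> 'a set \<Rightarrow> ('a \<Rightarrow> 'a \<Rightarrow> bool) \<Rightarrow> nat" where
  "closed_walks m V E = card {xs. is_walk V E xs \<and> length xs = Suc m \<and> hd xs = last xs}"

end

theory Submission imports Defs begin

text \<open>Both trees have 2000 vertices. The broom \<open>T\<^sub>1\<close> is a path on 1595 vertices with
  405 extra leaves at one end: its path part alone gives \<open>D(T\<^sub>1) \<ge> (1595\<^sup>3 - 1595)/3\<close>,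
  and the closed walks that bounce between the hub and the leaves give
  \<open>W\<^sub>2\<^sub>\<ell>(T\<^sub>1) \<ge> 405\<^sup>\<ell>\<close>. The comb \<open>T\<^sub>2\<close> is a path on 1000 vertices with a pendant
  leaf at each vertex: every vertex lies within distance 1 of the spine, so
  \<open>D(T\<^sub>2) \<le> 4(1000\<^sup>3 - 1000)/3 + 8\<cdot>10\<^sup>6\<close>, and its maximum degree is 3, so
  \<open>W\<^sub>2\<^sub>\<ell>(T\<^sub>2) \<le> 2000\<cdot>9\<^sup>\<ell> < 405\<^sup>\<ell>\<close> for \<open>\<ell> \<ge> 2\<close>.\<close>

lemma is_walk_singleton [simp]: "is_walk V E [x] \<longleftrightarrow> x \<in> V"
  by (simp add: is_walk_def)

lemma is_walk_Cons:
  assumes "xs \<noteq> []"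
  shows "is_walk V E (x # xs) \<longleftrightarrow> x \<in> V \<and> E x (hd xs) \<and> is_walk V E xs"
proof -
  have "(\<forall>i. Suc i < length (x # xs) \<longrightarrow> E ((x # xs) ! i) ((x # xs) ! Suc i))
        \<longleftrightarrow> E x (hd xs) \<and> (\<forall>i. Suc i < length xs \<longrightarrow> E (xs ! i) (xs ! Suc i))"
    (is "?l \<longleftrightarrow> ?r")
  proof
    assume l: ?l
    have "E x (hd xs)" using spec[OF l, of 0] assms by (simp add: hd_conv_nth)
    moreover have "E (xs ! i) (xs ! Suc i)" if "Suc i < length xs" for i
      using spec[OF l, of "Suc i"] that by simp
    ultimately show ?r by blast
  next
    assume ?r
    then show ?l using assms by (auto simp: nth_Cons hd_conv_nth split: nat.split)
  qed
  then show ?thesis using assms by (auto simp: is_walk_def)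
qed

lemma is_walk_append:
  assumes "xs \<noteq> []" "ys \<noteq> []"
  shows "is_walk V E (xs @ ys) \<longleftrightarrow> is_walk V E xs \<and> is_walk V E ys \<and> E (last xs) (hd ys)"
  using assms(1)
proof (induction xs)
  case (Cons x xs)
  then show ?case using assms(2) by (cases "xs = []") (auto simp: is_walk_Cons)
qed simp

lemma finite_walks_length:
  assumes "finite V"
  shows "finite {xs. is_walk V E xs \<and> length xs = k}"
  by (rule finite_subset[OF _ finite_lists_length_eq[OF assms, of k]]) (auto simp: is_walk_def)

inductive reach :: "'a set \<Rightarrow> ('a \<Rightarrow> 'a \<Rightarrow> bool) \<Rightarrow> 'a \<Rightarrow> 'a \<Rightarrow> nat \<Rightarrow> bool" for V E where
  reach_refl: "x \<in> V \<Longrightarrow> reach V E x x 0"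
| reach_step: "E x y \<Longrightarrow> x \<in> V \<Longrightarrow> reach V E y z n \<Longrightarrow> reach V E x z (Suc n)"

lemma reach_imp_walk:
  "reach V E x y n \<Longrightarrow> \<exists>xs. is_walk V E xs \<and> hd xs = x \<and> last xs = y \<and> length xs = Suc n"
proof (induction rule: reach.induct)
  case (reach_refl x)
  then show ?case by (intro exI[of _ "[x]"]) simp
next
  case (reach_step x y z n)
  then obtain xs where "is_walk V E xs" "hd xs = y" "last xs = z" "length xs = Suc n" by blast
  with reach_step show ?case by (intro exI[of _ "x # xs"]) (auto simp: is_walk_Cons)
qed

lemma reach_trans: "reach V E x y a \<Longrightarrow> reach V E y z b \<Longrightarrow> reach V E x z (a + b)"
  by (induction rule: reach.induct) (auto intro: reach_step)

lemma reach_edge: "E x y \<Longrightarrow> x \<in> V \<Longrightarrow> y \<in> V \<Longrightarrow> reach V E x y 1"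
  using reach_step[OF _ _ reach_refl] by simp

lemma reach_sym:
  assumes "simple_graph V E" "reach V E x y n"
  shows "reach V E y x n"
  using assms(2)
proof (induction rule: reach.induct)
  case (reach_refl x)
  then show ?case by (rule reach.reach_refl)
next
  case (reach_step x y z n)
  have "reach V E y x 1"
    using reach_step.hyps(1,2) assms(1) by (intro reach_edge) (auto simp: simple_graph_def)
  from reach_trans[OF reach_step.IH this] show ?case by simp
qed

lemma dist_le_reach: "reach V E x y n \<Longrightarrow> dist V E x y \<le> n"
  unfolding dist_def by (rule Least_le) (rule reach_imp_walk)

lemma walk_label_diff:
  assumes "is_walk V E xs" "\<And>u v. E u v \<Longrightarrow> \<bar>f u - f v\<bar> \<le> (1::int)" "j < length xs"
  shows "\<bar>f (xs ! 0) - f (xs ! j)\<bar> \<le> int j"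
  using assms(3)
proof (induction j)
  case (Suc j)
  have "E (xs ! j) (xs ! Suc j)" using assms(1) Suc.prems unfolding is_walk_def by blast
  then have "\<bar>f (xs ! j) - f (xs ! Suc j)\<bar> \<le> 1" using assms(2) by blast
  with Suc show ?case by simp
qed simp

lemma label_diff_le_dist:
  assumes "reach V E x y n" "\<And>u v. E u v \<Longrightarrow> \<bar>f u - f v\<bar> \<le> (1::int)"
  shows "\<bar>f x - f y\<bar> \<le> int (dist V E x y)"
proof -
  have "\<exists>xs. is_walk V E xs \<and> hd xs = x \<and> last xs = y \<and> length xs = Suc (dist V E x y)"
    unfolding dist_def by (rule LeastI_ex) (use reach_imp_walk[OF assms(1)] in blast)
  then obtain xs where xs: "is_walk V E xs" "hd xs = x" "last xs = y"
      "length xs = Suc (dist V E x y)" by blast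
  moreover have "xs \<noteq> []" using xs(4) by auto
  ultimately have "xs ! 0 = x" "xs ! (dist V E x y) = y"
    by (auto simp: hd_conv_nth last_conv_nth)
  with walk_label_diff[OF xs(1) assms(2), where j = "dist V E x y"] xs(4) show ?thesis by simp
qed

lemma cycle_two_neighbours:
  assumes "is_cycle V E xs" "v \<in> set (tl xs)"
  obtains a b where "a \<in> set (tl xs)" "b \<in> set (tl xs)" "a \<noteq> b" "E a v" "E v b"
proof -
  define m where "m = length xs - 1"
  have m3: "m \<ge> 3" and D: "distinct (tl xs)"
    using assms(1) by (auto simp: is_cycle_def m_def)
  have ne: "xs \<noteq> []" using m3 m_def by auto
  have tl_nth: "tl xs ! i = xs ! Suc i" if "i < m" for i
    using that m_def by (simp add: nth_tl)
  have wrap: "xs ! 0 = xs ! m"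
    using assms(1) ne m_def by (simp add: is_cycle_def hd_conv_nth last_conv_nth)
  have edge: "E (xs ! i) (xs ! Suc i)" if "i < m" for i
    using assms(1) that m_def by (auto simp: is_cycle_def is_walk_def)
  obtain i where i: "i < m" "xs ! Suc i = v"
    using assms(2) m_def by (auto simp: in_set_conv_nth tl_nth)
  define ia where "ia = (if i = 0 then m - 1 else i - 1)"
  define ib where "ib = (if Suc i < m then Suc i else 0)"
  have ia: "ia < m" "tl xs ! ia = xs ! i" and ib: "ib < m" "ia \<noteq> ib"
    using i m3 tl_nth wrap unfolding ia_def ib_def by auto
  have "E (tl xs ! ia) v" using edge[OF i(1)] i ia by simp
  moreover have "E v (tl xs ! ib)"
  proof (cases "Suc i < m")
    case True
    then show ?thesis using edge[OF True] i tl_nth unfolding ib_def by simp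
  next
    case False
    then have "Suc i = m" using i by simp
    then have "v = xs ! 0" using i wrap by simp
    then show ?thesis using edge[of 0] False m3 tl_nth unfolding ib_def by simp
  qed
  moreover have "tl xs ! ia \<noteq> tl xs ! ib"
    using D ia(1) ib m_def by (simp add: nth_eq_iff_index_eq)
  ultimately show thesis
    using that ia(1) ib(1) m_def by (metis length_tl nth_mem)
qed

definition parent_adj :: "nat \<Rightarrow> (nat \<Rightarrow> nat) \<Rightarrow> nat \<Rightarrow> nat \<Rightarrow> bool" where
  "parent_adj n par x y \<longleftrightarrow> x < n \<and> y < n \<and> ((0 < y \<and> x = par y) \<or> (0 < x \<and> y = par x))"

locale parent_tree =
  fixes n :: nat and par :: "nat \<Rightarrow> nat"
  assumes par_less: "0 < v \<Longrightarrow> v < n \<Longrightarrow> par v < v"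
begin

abbreviation "adj \<equiv> parent_adj n par"

lemma simple: "simple_graph {..<n} adj"
  unfolding simple_graph_def parent_adj_def using par_less by auto (metis less_irrefl)

lemma reach_root: "v < n \<Longrightarrow> \<exists>d. reach {..<n} adj v 0 d"
proof (induction v rule: less_induct)
  case (less v)
  show ?case
  proof (cases "v = 0")
    case True
    with less show ?thesis by (auto intro: reach_refl)
  next
    case False
    then have "par v < v" using par_less less.prems by simp
    moreover from this obtain d where "reach {..<n} adj (par v) 0 d" using less by auto
    ultimately have "reach {..<n} adj v 0 (Suc d)"
      using less.prems False by (intro reach_step) (auto simp: parent_adj_def)
    then show ?thesis by blast
  qed
qed

lemma reach: "x < n \<Longrightarrow> y < n \<Longrightarrow> \<exists>d. reach {..<n} adj x y d"
  using reach_root[of x] reach_root[of y] reach_sym[OF simple] reach_trans by metis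

lemma connected: "0 < n \<Longrightarrow> connected_graph {..<n} adj"
  unfolding connected_graph_def
proof (intro conjI ballI)
  fix x y assume "x \<in> {..<n}" "y \<in> {..<n}"
  then obtain d where "reach {..<n} adj x y d" using reach by auto
  from reach_imp_walk[OF this] show "\<exists>xs. is_walk {..<n} adj xs \<and> hd xs = x \<and> last xs = y" by blast
qed auto

lemma smaller_neighbour_is_parent:
  assumes "adj u v" "u \<le> v"
  shows "u = par v"
proof (rule ccontr)
  assume "u \<noteq> par v"
  with assms(1) have "0 < u" "u < n" "v = par u" by (auto simp: parent_adj_def)
  then have "v < u" using par_less by simp
  with assms(2) show False by simp
qed

text \<open>The largest vertex of a cycle would need two distinct smaller neighbours.\<close>

lemma no_cycle: "\<not> is_cycle {..<n} adj xs"
proof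
  assume cyc: "is_cycle {..<n} adj xs"
  define M where "M = Max (set (tl xs))"
  have "tl xs \<noteq> []" using cyc by (cases xs) (auto simp: is_cycle_def)
  then have "M \<in> set (tl xs)" unfolding M_def by (intro Max_in) auto
  then obtain a b where ab: "a \<in> set (tl xs)" "b \<in> set (tl xs)" "a \<noteq> b" "adj a M" "adj M b"
    by (rule cycle_two_neighbours[OF cyc])
  have "a \<le> M" "b \<le> M" using ab(1,2) unfolding M_def by auto
  moreover have "adj b M" using ab(5) simple by (simp add: simple_graph_def)
  ultimately have "a = par M" "b = par M" using ab(4) smaller_neighbour_is_parent by auto
  with ab(3) show False by simp
qed

lemma tree: "0 < n \<Longrightarrow> is_tree {..<n} adj"
  unfolding is_tree_def using simple connected no_cycle by blast

end

text \<open>\<open>path_dist_sum N\<close> is \<open>D\<close> of the path on \<open>N\<close> vertices.\<close>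

definition path_dist_sum :: "nat \<Rightarrow> nat" where
  "path_dist_sum N = (\<Sum>i<N. \<Sum>j<N. (i - j) + (j - i))"

lemma double_sum_lessThan_diff: "2 * (\<Sum>i<N. N - i) = N * (N + 1::nat)"
proof (induction N)
  case (Suc N)
  have "(\<Sum>i<Suc N. Suc N - i) = (\<Sum>i<N. (N - i) + 1) + 1"
    by (simp add: Suc_diff_le)
  also have "\<dots> = (\<Sum>i<N. N - i) + N + 1" by (simp only: sum.distrib) simp
  finally show ?case using Suc by simp
qed simp

lemma path_dist_sum_closed_form: "3 * path_dist_sum N + N = N ^ 3"
proof (induction N)
  case (Suc N)
  define d where "d = (\<lambda>i j::nat. (i - j) + (j - i))"
  have dNN: "d N N = 0" by (simp add: d_def)
  have unfold: "path_dist_sum M = (\<Sum>i<M. \<Sum>j<M. d i j)" for M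
    unfolding path_dist_sum_def d_def by simp
  have "path_dist_sum (Suc N) = (\<Sum>i<N. (\<Sum>j<N. d i j) + d i N) + ((\<Sum>j<N. d N j) + d N N)"
    unfolding unfold by (simp only: sum.lessThan_Suc)
  also have "\<dots> = path_dist_sum N + (\<Sum>i<N. d i N) + (\<Sum>j<N. d N j)"
    unfolding unfold using dNN by (simp add: sum.distrib)
  also have "(\<Sum>i<N. d i N) = (\<Sum>i<N. N - i)" by (rule sum.cong) (auto simp: d_def)
  also have "(\<Sum>j<N. d N j) = (\<Sum>i<N. N - i)" by (rule sum.cong) (auto simp: d_def)
  finally have "path_dist_sum (Suc N) = path_dist_sum N + N * (N + 1)"
    using double_sum_lessThan_diff[of N] by simp
  then show ?case using Suc by (simp add: power3_eq_cube algebra_simps)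
qed (simp add: path_dist_sum_def)

lemma card_walks_le_degree_power:
  assumes "finite V" and deg: "\<And>x. finite {y. E x y} \<and> card {y. E x y} \<le> d"
  shows "card {xs. is_walk V E xs \<and> length xs = Suc N} \<le> card V * d ^ N"
proof (induction N)
  case 0
  have "{xs. is_walk V E xs \<and> length xs = Suc 0} = (\<lambda>x. [x]) ` V"
    by (auto simp: length_Suc_conv)
  then show ?case using card_image_le[OF assms(1)] by simp
next
  case (Suc N)
  define W where "W = {xs. is_walk V E xs \<and> length xs = Suc N}"
  define X where "X = (SIGMA xs:W. {y. E (last xs) y})"
  have "finite W" unfolding W_def by (rule finite_walks_length[OF assms(1)])
  then have X: "finite X" "card X = (\<Sum>xs\<in>W. card {y. E (last xs) y})"
    using deg by (auto simp: X_def)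
  have "{xs. is_walk V E xs \<and> length xs = Suc (Suc N)} \<subseteq> (\<lambda>(xs, y). xs @ [y]) ` X"
  proof
    fix ys assume ys: "ys \<in> {xs. is_walk V E xs \<and> length xs = Suc (Suc N)}"
    then have split: "ys = butlast ys @ [last ys]" "butlast ys \<noteq> []"
      by (auto simp: length_Suc_conv)
    then have "(butlast ys, last ys) \<in> X"
      using ys is_walk_append[OF split(2), of "[last ys]" V E]
      by (simp add: X_def W_def)
    then show "ys \<in> (\<lambda>(xs, y). xs @ [y]) ` X" using split by force
  qed
  then have "card {xs. is_walk V E xs \<and> length xs = Suc (Suc N)} \<le> card X"
    using X by (meson card_image_le card_mono finite_imageI le_trans)
  also have "\<dots> \<le> card W * d" using X deg sum_bounded_above[of W "\<lambda>xs. card {y. E (last xs) y}" d] by simp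
  also have "\<dots> \<le> card V * d ^ Suc N" using Suc by (simp add: W_def)
  finally show ?case .
qed

lemma sum_lessThan_double_fold:
  fixes F :: "nat \<Rightarrow> 'b::comm_monoid_add"
  shows "(\<Sum>x<2 * m. F (if x < m then x else x - m)) = (\<Sum>i<m. F i) + (\<Sum>i<m. F i)"
proof -
  let ?G = "\<lambda>x. F (if x < m then x else x - m)"
  have "(\<Sum>x<2 * m. ?G x) = sum ?G {0..<m} + sum ?G {m..<m + m}"
    unfolding mult_2 atLeast0LessThan[symmetric]
    by (rule sum.atLeastLessThan_concat[symmetric]) simp_all
  also have "sum ?G {0..<m} = (\<Sum>i<m. F i)"
    by (rule sum.cong) auto
  also have "sum ?G {m..<m + m} = (\<Sum>i<m. F i)"
    using sum.shift_bounds_nat_ivl[of ?G 0 m m] by (simp add: atLeast0LessThan)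
  finally show ?thesis .
qed

text \<open>The broom: the path \<open>0 - 1 - \<dots> - (p-1)\<close> with the leaves \<open>p, \<dots>, n-1\<close> attached to \<open>0\<close>.\<close>

definition broom_parent :: "nat \<Rightarrow> nat \<Rightarrow> nat" where
  "broom_parent p v = (if v < p then v - 1 else 0)"

abbreviation broom_adj :: "nat \<Rightarrow> nat \<Rightarrow> nat \<Rightarrow> nat \<Rightarrow> bool" where
  "broom_adj n p \<equiv> parent_adj n (broom_parent p)"

lemma parent_tree_broom: "parent_tree n (broom_parent p)"
  by unfold_locales (auto simp: broom_parent_def)

lemma broom_dist_ge:
  assumes "x < p" "y < p" "p \<le> n"
  shows "(x - y) + (y - x) \<le> dist {..<n} (broom_adj n p) x y"
proof -
  define f where "f v = int (if v < p then v else 0)" for v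
  have "\<bar>f u - f v\<bar> \<le> 1" if "broom_adj n p u v" for u v
    using that unfolding f_def parent_adj_def broom_parent_def by (auto split: if_splits)
  moreover obtain d where "reach {..<n} (broom_adj n p) x y d"
    using parent_tree.reach[OF parent_tree_broom] assms by fastforce
  ultimately show ?thesis
    using label_diff_le_dist[of _ _ x y d f] assms unfolding f_def by fastforce
qed

lemma broom_total_dist_ge:
  assumes "p \<le> n"
  shows "path_dist_sum p \<le> total_dist {..<n} (broom_adj n p)"
proof -
  let ?d = "dist {..<n} (broom_adj n p)"
  have "path_dist_sum p \<le> (\<Sum>x<p. \<Sum>y<p. ?d x y)"
    unfolding path_dist_sum_def using assms by (intro sum_mono broom_dist_ge) auto
  also have "\<dots> \<le> (\<Sum>x<p. \<Sum>y<n. ?d x y)"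
    using assms by (intro sum_mono sum_mono2) auto
  also have "\<dots> \<le> (\<Sum>x<n. \<Sum>y<n. ?d x y)"
    using assms by (intro sum_mono2) auto
  finally show ?thesis unfolding total_dist_def .
qed

fun hub_walk :: "nat list \<Rightarrow> nat list" where
  "hub_walk [] = [0]"
| "hub_walk (c # cs) = 0 # c # hub_walk cs"

lemma hub_walk_closed_walk:
  assumes "0 < p" "p \<le> n" "set cs \<subseteq> {p..<n}"
  shows "is_walk {..<n} (broom_adj n p) (hub_walk cs) \<and> hd (hub_walk cs) = 0
    \<and> last (hub_walk cs) = 0 \<and> length (hub_walk cs) = Suc (2 * length cs)"
  using assms(3)
proof (induction cs)
  case (Cons c cs)
  then have "broom_adj n p 0 c" "broom_adj n p c 0" "c < n"
    using assms(1) by (auto simp: parent_adj_def broom_parent_def)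
  with Cons show ?case by (auto simp: is_walk_Cons)
qed (use assms in simp)

lemma hub_walk_inj: "hub_walk xs = hub_walk ys \<Longrightarrow> xs = ys"
proof (induction xs arbitrary: ys)
  case Nil
  then show ?case by (cases ys) auto
next
  case (Cons c xs)
  then show ?case by (cases ys) auto
qed

lemma broom_closed_walks_ge:
  assumes "0 < p" "p \<le> n"
  shows "(n - p) ^ l \<le> closed_walks (2 * l) {..<n} (broom_adj n p)"
proof -
  define L where "L = {cs. set cs \<subseteq> {p..<n} \<and> length cs = l}"
  have "(n - p) ^ l = card (hub_walk ` L)"
    using hub_walk_inj by (simp add: L_def card_lists_length_eq card_image inj_on_def)
  also have "\<dots> \<le> closed_walks (2 * l) {..<n} (broom_adj n p)"
    unfolding closed_walks_def
  proof (rule card_mono)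
    show "finite {xs. is_walk {..<n} (broom_adj n p) xs
        \<and> length xs = Suc (2 * l) \<and> hd xs = last xs}"
      by (rule finite_subset[OF _ finite_walks_length[of "{..<n}" _ "Suc (2 * l)"]]) auto
    show "hub_walk ` L \<subseteq> {xs. is_walk {..<n} (broom_adj n p) xs
        \<and> length xs = Suc (2 * l) \<and> hd xs = last xs}"
      using hub_walk_closed_walk[OF assms] unfolding L_def by auto
  qed
  finally show ?thesis .
qed

text \<open>The comb: the path \<open>0 - 1 - \<dots> - (m-1)\<close> with a leaf \<open>v + m\<close> attached to each \<open>v < m\<close>.\<close>

definition comb_parent :: "nat \<Rightarrow> nat \<Rightarrow> nat" where
  "comb_parent m v = (if v < m then v - 1 else v - m)"

abbreviation comb_adj :: "nat \<Rightarrow> nat \<Rightarrow> nat \<Rightarrow> bool" where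
  "comb_adj m \<equiv> parent_adj (2 * m) (comb_parent m)"

definition comb_foot :: "nat \<Rightarrow> nat \<Rightarrow> nat" where
  "comb_foot m x = (if x < m then x else x - m)"

lemma parent_tree_comb: "parent_tree (2 * m) (comb_parent m)"
  by unfold_locales (auto simp: comb_parent_def)

lemma comb_reach_spine: "j < m \<Longrightarrow> i \<le> j \<Longrightarrow> reach {..<2 * m} (comb_adj m) i j (j - i)"
proof (induction j arbitrary: i)
  case 0
  then show ?case by (auto intro: reach_refl)
next
  case (Suc j)
  show ?case
  proof (cases "i = Suc j")
    case True
    with Suc.prems show ?thesis by (auto intro: reach_refl)
  next
    case False
    with Suc have "reach {..<2 * m} (comb_adj m) i j (j - i)" by simp
    moreover have "reach {..<2 * m} (comb_adj m) j (Suc j) 1"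
      using Suc.prems by (intro reach_edge) (auto simp: parent_adj_def comb_parent_def)
    ultimately have "reach {..<2 * m} (comb_adj m) i (Suc j) ((j - i) + 1)"
      by (rule reach_trans)
    moreover have "(j - i) + 1 = Suc j - i" using False Suc.prems by simp
    ultimately show ?thesis by simp
  qed
qed

lemma comb_reach_foot:
  assumes "x < 2 * m"
  shows "reach {..<2 * m} (comb_adj m) x (comb_foot m x) (if x < m then 0 else 1)"
proof (cases "x < m")
  case True
  with assms show ?thesis by (auto simp: comb_foot_def intro: reach_refl)
next
  case False
  with assms have "reach {..<2 * m} (comb_adj m) x (x - m) 1"
    by (intro reach_edge) (auto simp: parent_adj_def comb_parent_def)
  with False show ?thesis by (simp add: comb_foot_def)
qed

lemma comb_dist_le:
  assumes "x < 2 * m" "y < 2 * m"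
  shows "dist {..<2 * m} (comb_adj m) x y
    \<le> (comb_foot m x - comb_foot m y) + (comb_foot m y - comb_foot m x) + 2"
proof -
  let ?i = "comb_foot m x" and ?j = "comb_foot m y"
  have "?i < m" "?j < m" using assms by (auto simp: comb_foot_def)
  then have "reach {..<2 * m} (comb_adj m) ?i ?j ((?i - ?j) + (?j - ?i))"
    using comb_reach_spine reach_sym[OF parent_tree.simple[OF parent_tree_comb]]
    by (cases "?i \<le> ?j") (auto simp: not_le less_imp_le)
  from reach_trans[OF reach_trans[OF comb_reach_foot[OF assms(1)] this]
      reach_sym[OF parent_tree.simple[OF parent_tree_comb] comb_reach_foot[OF assms(2)]]]
  show ?thesis by (auto dest: dist_le_reach split: if_splits)
qed

lemma comb_total_dist_le: "total_dist {..<2 * m} (comb_adj m) \<le> 4 * path_dist_sum m + 8 * m ^ 2"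
proof -
  define F where "F i j = (i - j) + (j - i) + 2" for i j :: nat
  have "total_dist {..<2 * m} (comb_adj m) \<le> (\<Sum>x<2 * m. \<Sum>y<2 * m. F (comb_foot m x) (comb_foot m y))"
    unfolding total_dist_def F_def by (intro sum_mono comb_dist_le) auto
  also have "\<dots> = 4 * (\<Sum>i<m. \<Sum>j<m. F i j)"
    unfolding comb_foot_def
    by (simp add: sum_lessThan_double_fold[of "F _"] sum_lessThan_double_fold[of "\<lambda>i. \<Sum>j<m. F i j"]
        sum.distrib)
  also have "(\<Sum>i<m. \<Sum>j<m. F i j) = path_dist_sum m + (\<Sum>i<m. \<Sum>j<m. 2)"
    unfolding F_def path_dist_sum_def by (simp only: sum.distrib)
  finally show ?thesis by (simp add: power2_eq_square)
qed

lemma comb_degree_le: "finite {y. comb_adj m x y} \<and> card {y. comb_adj m x y} \<le> 3"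
proof -
  define N where "N = (if x < m then {x - 1, x + 1, x + m} else {x - m})"
  have "{y. comb_adj m x y} \<subseteq> N"
    unfolding N_def parent_adj_def comb_parent_def by (auto split: if_splits)
  moreover have "finite N" "card N \<le> 3"
    unfolding N_def by (auto simp: card_insert_if)
  ultimately show ?thesis using finite_subset card_mono le_trans by metis
qed

lemma comb_closed_walks_le: "closed_walks (2 * l) {..<2 * m} (comb_adj m) \<le> 2 * m * 9 ^ l"
proof -
  have "closed_walks (2 * l) {..<2 * m} (comb_adj m)
      \<le> card {xs. is_walk {..<2 * m} (comb_adj m) xs \<and> length xs = Suc (2 * l)}"
    unfolding closed_walks_def by (intro card_mono finite_walks_length) auto
  also have "\<dots> \<le> card {..<2 * m} * 3 ^ (2 * l)"
    by (intro card_walks_le_degree_power comb_degree_le) simp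
  finally show ?thesis by (simp add: power_mult)
qed

lemma times_9_power_less_405_power: "2 \<le> l \<Longrightarrow> 2000 * 9 ^ l < (405::nat) ^ l"
proof (induction l rule: nat_induct_at_least)
  case (Suc l)
  then have "2000 * 9 ^ Suc l < 9 * (405::nat) ^ l" by simp
  also have "\<dots> \<le> 405 ^ Suc l" by simp
  finally show ?case .
qed simp

theorem mainTheorem8:
  fixes l :: nat
  assumes "l \<ge> 2"
  shows "\<exists>(V1 :: nat set) E1 (V2 :: nat set) E2.
           is_tree V1 E1 \<and> is_tree V2 E2 \<and> card V1 = card V2 \<and>
           total_dist V1 E1 > total_dist V2 E2 \<and>
           closed_walks (2 * l) V1 E1 > closed_walks (2 * l) V2 E2"
proof (intro exI conjI)
  show "is_tree {..<2000} (broom_adj 2000 1595)"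
    by (rule parent_tree.tree[OF parent_tree_broom]) simp
  show "is_tree {..<2 * 1000} (comb_adj 1000)"
    by (rule parent_tree.tree[OF parent_tree_comb]) simp
  show "card {..<2000::nat} = card {..<2 * 1000::nat}" by simp
  have "4 * path_dist_sum 1000 + 8 * 1000 ^ 2 < path_dist_sum 1595"
    using path_dist_sum_closed_form[of 1000] path_dist_sum_closed_form[of 1595] by simp
  then show "total_dist {..<2 * 1000} (comb_adj 1000) < total_dist {..<2000} (broom_adj 2000 1595)"
    using comb_total_dist_le[of 1000] broom_total_dist_ge[of 1595 2000] by simp
  show "closed_walks (2 * l) {..<2 * 1000} (comb_adj 1000) < closed_walks (2 * l) {..<2000} (broom_adj 2000 1595)"
    using comb_closed_walks_le[of l 1000] broom_closed_walks_ge[of 1595 2000 l]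
      times_9_power_less_405_power[OF assms] by simp
qed

end
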